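(* Let $\Gamma$ be a distance-regular graph with diameter $D\ge3$ and $a_1\ne0$. Let $\sigma_0,\dots,\sigma_D$ and $\rho_0,\dots,\rho_D$ be nontrivial pseudo cosine sequences forming a tight pair, with auxiliary parameter $\varepsilon$. Then for each $i$ with $1\le i\le D-1$ the following are equivalent: (i) $\sigma_{i-1}=\varepsilon\sigma_i$; (ii) $\sigma_{i+1}=\varepsilon\sigma_i$; (iii) $\sigma_{i-1}=\sigma_{i+1}$; (iv) $\rho_i=0$.
   Context: $\Gamma$ is a finite connected undirected graph without loops or multiple edges, distance-regular with diameter $D$, intersection numbers $a_i,b_i,c_i$ ($c_0=0$, $b_D=0$), valency $k$, $c_i+a_i+b_i=k$. For $\theta\in\mathbb{R}$ the pseudo cosine sequence for $\theta$ is the sequence of reals $\sigma_0,\dots,\sigma_D$ with $\sigma_0=1$ and $c_i\sigma_{i-1}+a_i\sigma_i+b_i\sigma_{i+1}=\theta\sigma_i$ for $0\le i\le D-1$; nontrivial means $\sigma_1\ne1$. Pseudo cosine sequences $\sigma_i$, $\rho_i$ form a tight pair if $(\sigma_i\rho_i)_{i=0}^D$ is a pseudo cosine sequence. For a tight pair of nontrivial pseudo cosine sequences, an auxiliary parameter is a real $\varepsilon$ with $\sigma_i\rho_i-\sigma_{i-1}\rho_{i-1}=\varepsilon(\sigma_{i-1}\rho_i-\sigma_i\rho_{i-1})$ for $1\le i\le D$. *)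

theory Defs
  imports Complex_Main
begin

definition simple_graph :: "'a set \<Rightarrow> ('a \<Rightarrow> 'a \<Rightarrow> bool) \<Rightarrow> bool" where
  "simple_graph V E \<longleftrightarrow> finite V \<and> V \<noteq> {} \<and>
     (\<forall>x y. E x y \<longrightarrow> x \<in> V \<and> y \<in> V) \<and>
     (\<forall>x y. E x y \<longrightarrow> E y x) \<and> (\<forall>x. \<not> E x x)"

definition gdist :: "('a \<Rightarrow> 'a \<Rightarrow> bool) \<Rightarrow> 'a \<Rightarrow> 'a \<Rightarrow> nat" where
  "gdist E x y = (LEAST n. (E ^^ n) x y)"

definition connected_graph :: "'a set \<Rightarrow> ('a \<Rightarrow> 'a \<Rightarrow> bool) \<Rightarrow> bool" where
  "connected_graph V E \<longleftrightarrow> (\<forall>x\<in>V. \<forall>y\<in>V. \<exists>n. (E ^^ n) x y)"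

definition diameter :: "'a set \<Rightarrow> ('a \<Rightarrow> 'a \<Rightarrow> bool) \<Rightarrow> nat" where
  "diameter V E = Max {gdist E x y | x y. x \<in> V \<and> y \<in> V}"

text \<open>Gamma = (V,E) is distance-regular with diameter D and intersection numbers
a_i, b_i, c_i (0 \<le> i \<le> D): for all x, y at distance i,
c_i = |Gamma_{i-1}(x) \<inter> Gamma(y)|, a_i = |Gamma_i(x) \<inter> Gamma(y)|,
b_i = |Gamma_{i+1}(x) \<inter> Gamma(y)|; with c_0 = 0 (and b_D = 0 automatically).\<close>
definition distance_regular ::
  "'a set \<Rightarrow> ('a \<Rightarrow> 'a \<Rightarrow> bool) \<Rightarrow> nat \<Rightarrow> (nat \<Rightarrow> nat) \<Rightarrow> (nat \<Rightarrow> nat) \<Rightarrow> (nat \<Rightarrow> nat) \<Rightarrow> bool" where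
  "distance_regular V E D a b c \<longleftrightarrow>
     simple_graph V E \<and> connected_graph V E \<and> diameter V E = D \<and> c 0 = 0 \<and>
     (\<forall>x\<in>V. \<forall>y\<in>V. let i = gdist E x y in
        (i > 0 \<longrightarrow> c i = card {z\<in>V. gdist E x z = i - 1 \<and> E y z}) \<and>
        a i = card {z\<in>V. gdist E x z = i \<and> E y z} \<and>
        b i = card {z\<in>V. gdist E x z = i + 1 \<and> E y z})"

text \<open>Pseudo cosine sequence for theta (only the values sigma_0..sigma_D matter).\<close>
definition pseudo_cosine ::
  "nat \<Rightarrow> (nat \<Rightarrow> nat) \<Rightarrow> (nat \<Rightarrow> nat) \<Rightarrow> (nat \<Rightarrow> nat) \<Rightarrow> real \<Rightarrow> (nat \<Rightarrow> real) \<Rightarrow> bool" where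
  "pseudo_cosine D a b c \<theta> \<sigma> \<longleftrightarrow> \<sigma> 0 = 1 \<and>
     (\<forall>i<D. (if i = 0 then 0 else real (c i) * \<sigma> (i - 1)) + real (a i) * \<sigma> i
             + real (b i) * \<sigma> (i + 1) = \<theta> * \<sigma> i)"

definition is_pseudo_cosine ::
  "nat \<Rightarrow> (nat \<Rightarrow> nat) \<Rightarrow> (nat \<Rightarrow> nat) \<Rightarrow> (nat \<Rightarrow> nat) \<Rightarrow> (nat \<Rightarrow> real) \<Rightarrow> bool" where
  "is_pseudo_cosine D a b c \<sigma> \<longleftrightarrow> (\<exists>\<theta>. pseudo_cosine D a b c \<theta> \<sigma>)"

definition nontrivial_pc ::
  "nat \<Rightarrow> (nat \<Rightarrow> nat) \<Rightarrow> (nat \<Rightarrow> nat) \<Rightarrow> (nat \<Rightarrow> nat) \<Rightarrow> (nat \<Rightarrow> real) \<Rightarrow> bool" where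
  "nontrivial_pc D a b c \<sigma> \<longleftrightarrow> is_pseudo_cosine D a b c \<sigma> \<and> \<sigma> 1 \<noteq> 1"

definition tight_pair ::
  "nat \<Rightarrow> (nat \<Rightarrow> nat) \<Rightarrow> (nat \<Rightarrow> nat) \<Rightarrow> (nat \<Rightarrow> nat) \<Rightarrow> (nat \<Rightarrow> real) \<Rightarrow> (nat \<Rightarrow> real) \<Rightarrow> bool" where
  "tight_pair D a b c \<sigma> \<rho> \<longleftrightarrow> is_pseudo_cosine D a b c \<sigma> \<and> is_pseudo_cosine D a b c \<rho> \<and>
     is_pseudo_cosine D a b c (\<lambda>i. \<sigma> i * \<rho> i)"

definition auxiliary_parameter :: "nat \<Rightarrow> (nat \<Rightarrow> real) \<Rightarrow> (nat \<Rightarrow> real) \<Rightarrow> real \<Rightarrow> bool" where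
  "auxiliary_parameter D \<sigma> \<rho> \<epsilon> \<longleftrightarrow>
     (\<forall>i\<in>{1..D}. \<sigma> i * \<rho> i - \<sigma> (i - 1) * \<rho> (i - 1) =
                 \<epsilon> * (\<sigma> (i - 1) * \<rho> i - \<sigma> i * \<rho> (i - 1)))"

end

theory Submission imports Defs begin

text \<open>Write \<open>k = b\<^sub>0\<close>; a pseudo cosine sequence for \<open>\<theta>\<close> has \<open>\<theta> = k \<sigma>\<^sub>1\<close>. The defining
  relation of \<open>\<epsilon>\<close> can be rearranged to
  \<open>\<rho>\<^sub>j (\<sigma>\<^sub>j - \<epsilon> \<sigma>\<^sub>j\<^sub>-\<^sub>1) = \<rho>\<^sub>j\<^sub>-\<^sub>1 (\<sigma>\<^sub>j\<^sub>-\<^sub>1 - \<epsilon> \<sigma>\<^sub>j)\<close>. Since a pseudo cosine sequence never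
  has two consecutive zeros, this shows at once that (i) and (ii) are each equivalent to
  \<open>\<rho>\<^sub>i = 0\<close>, provided \<open>\<epsilon>\<^sup>2 \<noteq> 1\<close>. The value \<open>\<epsilon> = 1\<close> is ruled out by following the three
  recurrences (for \<open>\<sigma>\<close>, \<open>\<rho>\<close> and \<open>\<sigma>\<rho>\<close>) through \<open>j = 1, 2\<close>: they force \<open>\<rho>\<^sub>1 = -1\<close>,
  \<open>k \<sigma>\<^sub>1 = -1\<close>, \<open>\<rho>\<^sub>2 > 1\<close>, \<open>\<sigma>\<^sub>2 = \<sigma>\<^sub>1\<close>, \<open>\<sigma>\<^sub>3 > 0\<close>, \<open>\<rho>\<^sub>3 = -\<rho>\<^sub>2\<close> and finally
  \<open>c\<^sub>2 (1 - \<rho>\<^sub>2) = 2 a\<^sub>2 \<rho>\<^sub>2\<close>, whose sides have opposite signs; \<open>\<epsilon> = -1\<close> is the same case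
  with \<open>\<sigma>\<close> and \<open>\<rho>\<close> swapped. For (iii): if \<open>\<rho>\<^sub>i \<noteq> 0\<close>, the rearranged relation at \<open>i\<close> and
  \<open>i + 1\<close> makes \<open>\<rho>\<close> symmetric about \<open>i\<close> together with \<open>\<sigma>\<close>; comparing the product of the
  recurrences of \<open>\<sigma>\<close> and \<open>\<rho>\<close> at \<open>i\<close> with that of \<open>\<sigma>\<rho>\<close> then gives
  \<open>a\<^sub>i k (\<sigma>\<^sub>1 - 1)(\<rho>\<^sub>1 - 1) \<sigma>\<^sub>i \<rho>\<^sub>i = 0\<close>, impossible because \<open>a\<^sub>1 \<noteq> 0\<close> implies \<open>a\<^sub>i \<noteq> 0\<close>
  and a pseudo cosine sequence symmetric about \<open>i\<close> cannot vanish at \<open>i\<close>.\<close>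

lemma card_Collect_pos: "finite V \<Longrightarrow> w \<in> V \<Longrightarrow> P w \<Longrightarrow> 0 < card {z\<in>V. P z}"
  by (subst card_gt_0_iff) auto

locale connected_simple_graph =
  fixes V :: "'v set" and E :: "'v \<Rightarrow> 'v \<Rightarrow> bool"
  assumes simple: "simple_graph V E" and connected: "connected_graph V E"
begin

lemma finite_V: "finite V"
  and V_nonempty: "V \<noteq> {}"
  and adj_sym: "E x y \<Longrightarrow> E y x"
  and adj_irrefl: "\<not> E x x"
  and adj_in_V: "E x y \<Longrightarrow> x \<in> V" "E x y \<Longrightarrow> y \<in> V"
  using simple unfolding simple_graph_def by blast+

lemma walk_sym: "(E ^^ n) x y \<Longrightarrow> (E ^^ n) y x"
proof (induction n arbitrary: x y)
  case (Suc n)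
  then obtain z where "(E ^^ n) x z" "E z y" by (blast elim: relpowp_Suc_E)
  with Suc.IH adj_sym show ?case by (metis relpowp_Suc_I2)
qed simp

lemma gdist_walk: "x \<in> V \<Longrightarrow> y \<in> V \<Longrightarrow> (E ^^ gdist E x y) x y"
  unfolding gdist_def using connected unfolding connected_graph_def by (meson LeastI_ex)

lemma gdist_le: "(E ^^ n) x y \<Longrightarrow> gdist E x y \<le> n"
  unfolding gdist_def by (rule Least_le)

lemma gdist_sym: "gdist E x y = gdist E y x"
  unfolding gdist_def using walk_sym by metis

lemma gdist_self [simp]: "gdist E x x = 0"
  using gdist_le[of 0 x x] by simp

lemma gdist_eq_0_iff: "x \<in> V \<Longrightarrow> y \<in> V \<Longrightarrow> gdist E x y = 0 \<longleftrightarrow> x = y"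
  using gdist_walk[of x y] by auto

lemma gdist_eq_1_iff: "x \<in> V \<Longrightarrow> y \<in> V \<Longrightarrow> gdist E x y = 1 \<longleftrightarrow> E x y"
proof
  assume "x \<in> V" "y \<in> V" "gdist E x y = 1"
  then show "E x y" using gdist_walk[of x y] by auto
next
  assume "x \<in> V" "y \<in> V" "E x y"
  moreover have "gdist E x y \<le> 1" using gdist_le[of 1 x y] \<open>E x y\<close> by auto
  ultimately show "gdist E x y = 1" using gdist_eq_0_iff adj_irrefl by fastforce
qed

lemma gdist_adj_le: "E y z \<Longrightarrow> x \<in> V \<Longrightarrow> gdist E x z \<le> gdist E x y + 1"
  using gdist_walk[of x y] adj_in_V gdist_le[of "Suc (gdist E x y)" x z] by fastforce

lemma gdist_Suc_predecessor:
  assumes "x \<in> V" "y \<in> V" "gdist E x y = Suc n"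
  obtains z where "z \<in> V" "E z y" "gdist E x z = n"
proof -
  have "(E ^^ Suc n) x y" using gdist_walk[OF assms(1,2)] assms(3) by simp
  then obtain z where walk: "(E ^^ n) x z" and zy: "E z y" by (rule relpowp_Suc_E)
  have "gdist E x z = n"
    using gdist_le[OF walk] gdist_adj_le[OF zy assms(1)] assms(3) by simp
  then show thesis by (rule that[OF adj_in_V(1)[OF zy] zy])
qed

lemma gdist_attained_below:
  "x \<in> V \<Longrightarrow> y \<in> V \<Longrightarrow> j \<le> gdist E x y \<Longrightarrow> \<exists>z\<in>V. gdist E x z = j"
proof (induction "gdist E x y" arbitrary: y)
  case (Suc n)
  then obtain z where "z \<in> V" "gdist E x z = n" by (metis gdist_Suc_predecessor)
  with Suc show ?case by (metis le_Suc_eq)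
qed auto

lemma gdist_attained: "j \<le> diameter V E \<Longrightarrow> \<exists>x\<in>V. \<exists>y\<in>V. gdist E x y = j"
proof -
  assume j: "j \<le> diameter V E"
  let ?S = "{gdist E x y | x y. x \<in> V \<and> y \<in> V}"
  have "?S = (\<lambda>(x, y). gdist E x y) ` (V \<times> V)" by auto
  then have "finite ?S" using finite_V by simp
  moreover have "?S \<noteq> {}" using V_nonempty by auto
  ultimately have "diameter V E \<in> ?S" unfolding diameter_def by (rule Max_in)
  then obtain x y where xy: "x \<in> V" "y \<in> V" "gdist E x y = diameter V E" by auto
  then show ?thesis using gdist_attained_below[OF xy(1,2), of j] j by auto
qed

end

locale distance_regular_graph =
  fixes V :: "'v set" and E :: "'v \<Rightarrow> 'v \<Rightarrow> bool" and D :: nat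
    and a b c :: "nat \<Rightarrow> nat"
  assumes distance_regular: "distance_regular V E D a b c"
begin

sublocale connected_simple_graph V E
  using distance_regular unfolding distance_regular_def by unfold_locales auto

lemma diameter_eq: "diameter V E = D"
  using distance_regular unfolding distance_regular_def by auto

lemma pair_at_distance:
  assumes "j \<le> D"
  obtains x y where "x \<in> V" "y \<in> V" "gdist E x y = j"
  using gdist_attained[of j] assms diameter_eq by auto

lemma
  assumes "x \<in> V" "y \<in> V"
  shows c_card: "0 < gdist E x y \<Longrightarrow>
      c (gdist E x y) = card {z\<in>V. gdist E x z = gdist E x y - 1 \<and> E y z}"
    and a_card: "a (gdist E x y) = card {z\<in>V. gdist E x z = gdist E x y \<and> E y z}"
    and b_card: "b (gdist E x y) = card {z\<in>V. gdist E x z = gdist E x y + 1 \<and> E y z}"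
  using distance_regular assms unfolding distance_regular_def Let_def by blast+

lemma a_0: "a 0 = 0"
proof -
  obtain x where x: "x \<in> V" using V_nonempty by auto
  have "a 0 = card {z\<in>V. gdist E x z = 0 \<and> E x z}" using a_card[OF x x] by simp
  also have "{z\<in>V. gdist E x z = 0 \<and> E x z} = {}" using gdist_eq_0_iff[OF x] adj_irrefl by blast
  finally show ?thesis by simp
qed

lemma c_1: "1 \<le> D \<Longrightarrow> c 1 = 1"
proof -
  assume "1 \<le> D"
  then obtain x y where xy: "x \<in> V" "y \<in> V" "gdist E x y = 1" by (rule pair_at_distance)
  then have "{z\<in>V. gdist E x z = 0 \<and> E y z} = {x}"
    using gdist_eq_0_iff gdist_eq_1_iff adj_sym by auto
  then show ?thesis using c_card[OF xy(1,2)] xy(3) by simp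
qed

lemma b_pos: "j < D \<Longrightarrow> 0 < b j"
proof -
  assume "j < D"
  obtain x w where xw: "x \<in> V" "w \<in> V" "gdist E x w = Suc j"
    using Suc_leI[OF \<open>j < D\<close>] by (rule pair_at_distance)
  then obtain y where "y \<in> V" "E y w" "gdist E x y = j" by (rule gdist_Suc_predecessor)
  then show ?thesis using b_card[of x y] card_Collect_pos[OF finite_V] xw by auto
qed

lemma c_pos: "1 \<le> j \<Longrightarrow> j \<le> D \<Longrightarrow> 0 < c j"
proof -
  assume j: "1 \<le> j" "j \<le> D"
  obtain x y where xy: "x \<in> V" "y \<in> V" "gdist E x y = j"
    using j(2) by (rule pair_at_distance)
  with j have "gdist E x y = Suc (j - 1)" by simp
  then obtain z where z: "z \<in> V" "E z y" "gdist E x z = j - 1"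
    by (rule gdist_Suc_predecessor[OF xy(1,2)])
  have "0 < card {z\<in>V. gdist E x z = j - 1 \<and> E y z}"
    using card_Collect_pos[OF finite_V z(1)] z(3) adj_sym[OF z(2)] by simp
  then show ?thesis using c_card[OF xy(1,2)] xy(3) j by simp
qed

lemma abc_sum: "1 \<le> j \<Longrightarrow> j \<le> D \<Longrightarrow> a j + b j + c j = b 0"
proof -
  assume j: "1 \<le> j" "j \<le> D"
  obtain x y where xy: "x \<in> V" "y \<in> V" "gdist E x y = j"
    using j(2) by (rule pair_at_distance)
  let ?A = "{z\<in>V. gdist E x z = j \<and> E y z}"
  let ?B = "{z\<in>V. gdist E x z = j + 1 \<and> E y z}"
  let ?C = "{z\<in>V. gdist E x z = j - 1 \<and> E y z}"
  have "{z\<in>V. E y z} = ?A \<union> ?B \<union> ?C"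
  proof -
    have "j \<le> gdist E x z + 1" "gdist E x z \<le> j + 1" if "E y z" for z
      using gdist_adj_le[OF adj_sym[OF that] xy(1)] gdist_adj_le[OF that xy(1)] xy(3) by auto
    then show ?thesis using j by fastforce
  qed
  moreover have "card (?A \<union> ?B \<union> ?C) = card ?A + card ?B + card ?C"
    using finite_V j by (subst card_Un_disjoint; auto simp: card_Un_disjoint)+
  moreover have "{z\<in>V. gdist E y z = 1 \<and> E y z} = {z\<in>V. E y z}"
    using gdist_eq_1_iff[OF xy(2)] by blast
  ultimately show ?thesis
    using a_card[OF xy(1,2)] b_card[OF xy(1,2)] c_card[OF xy(1,2)] b_card[OF xy(2,2)] xy(3) j
    by simp
qed

text \<open>Take \<open>x, z\<close> at distance \<open>i + 1\<close>, a neighbour \<open>y\<close> of \<open>z\<close> at distance \<open>i\<close> from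
  \<open>x\<close>, and a neighbour \<open>x'\<close> of \<open>x\<close> at distance \<open>i - 1\<close> from \<open>y\<close>. As \<open>a\<^sub>1 \<noteq> 0\<close>
  there is a common neighbour \<open>t\<close> of \<open>x\<close> and \<open>x'\<close>. If \<open>t\<close> is at distance \<open>i\<close> from \<open>y\<close>,
  it is counted by \<open>a\<^sub>i\<close> for the pair \<open>(y, x)\<close>; otherwise it is at distance \<open>i - 1\<close> from
  \<open>y\<close>, hence at distance \<open>i\<close> from \<open>z\<close>, and is counted by \<open>a\<^sub>i\<close> for the pair \<open>(z, x')\<close>.\<close>
lemma a_nonzero:
  assumes a1: "a 1 \<noteq> 0" and i: "1 \<le> i" "i < D"
  shows "a i \<noteq> 0"
proof -
  obtain x z where xz: "x \<in> V" "z \<in> V" "gdist E x z = Suc i"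
    using Suc_leI[OF i(2)] by (rule pair_at_distance)
  then obtain y where y: "y \<in> V" "E y z" "gdist E x y = i" by (rule gdist_Suc_predecessor)
  have yx: "gdist E y x = Suc (i - 1)" using y(3) i gdist_sym[of y x] by simp
  then obtain x' where x': "x' \<in> V" "E x' x" "gdist E y x' = i - 1"
    by (rule gdist_Suc_predecessor[OF y(1) xz(1)])
  have "gdist E x x' = 1" using gdist_eq_1_iff[OF xz(1) x'(1)] adj_sym[OF x'(2)] by simp
  then have "a 1 = card {t\<in>V. gdist E x t = 1 \<and> E x' t}" using a_card[OF xz(1) x'(1)] by simp
  with a1 have "{t\<in>V. gdist E x t = 1 \<and> E x' t} \<noteq> {}" by (metis card.empty)
  then obtain t where t: "t \<in> V" "gdist E x t = 1" "E x' t" by blast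
  have xt: "E x t" using gdist_eq_1_iff[OF xz(1) t(1)] t(2) by simp
  have "gdist E y t \<le> i" using gdist_adj_le[OF t(3) y(1)] x'(3) i by simp
  moreover have "i \<le> gdist E y t + 1" using gdist_adj_le[OF adj_sym[OF xt] y(1)] yx i by simp
  ultimately consider "gdist E y t = i" | "gdist E y t = i - 1" by linarith
  then show ?thesis
  proof cases
    case 1
    then have "0 < card {w\<in>V. gdist E y w = i \<and> E x w}"
      using card_Collect_pos[OF finite_V t(1)] xt by simp
    then show ?thesis using a_card[OF y(1) xz(1)] yx i by simp
  next
    case 2
    have "gdist E t z \<le> gdist E t y + 1" "gdist E x' z \<le> gdist E x' y + 1"
      using gdist_adj_le[OF y(2) t(1)] gdist_adj_le[OF y(2) x'(1)] by simp_all
    moreover have "gdist E z x \<le> gdist E z t + 1" "gdist E z x \<le> gdist E z x' + 1"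
      using gdist_adj_le[OF adj_sym[OF xt] xz(2)] gdist_adj_le[OF x'(2) xz(2)] by simp_all
    ultimately have "gdist E z t = i" "gdist E z x' = i"
      using 2 x'(3) xz(3) i gdist_sym[of t y] gdist_sym[of x' y] gdist_sym[of t z]
        gdist_sym[of x' z] gdist_sym[of z x] by auto
    then have "0 < card {w\<in>V. gdist E z w = i \<and> E x' w}"
      using card_Collect_pos[OF finite_V t(1)] t(3) by simp
    then show ?thesis using a_card[OF xz(2) x'(1)] \<open>gdist E z x' = i\<close> by simp
  qed
qed

end

lemma pseudo_cosine_0: "pseudo_cosine D a b c \<theta> \<sigma> \<Longrightarrow> \<sigma> 0 = 1"
  unfolding pseudo_cosine_def by simp

lemma is_pseudo_cosine_0: "is_pseudo_cosine D a b c \<sigma> \<Longrightarrow> \<sigma> 0 = 1"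
  unfolding is_pseudo_cosine_def using pseudo_cosine_0 by blast

lemma pseudo_cosine_recurrence:
  assumes "pseudo_cosine D a b c \<theta> \<sigma>" "0 < j" "j < D"
  shows "real (c j) * \<sigma> (j - 1) + real (a j) * \<sigma> j + real (b j) * \<sigma> (j + 1) = \<theta> * \<sigma> j"
proof -
  have "(if j = 0 then 0 else real (c j) * \<sigma> (j - 1)) + real (a j) * \<sigma> j
      + real (b j) * \<sigma> (j + 1) = \<theta> * \<sigma> j"
    using assms(1,3) unfolding pseudo_cosine_def by blast
  then show ?thesis using assms(2) by simp
qed

lemma pseudo_cosine_eigenvalue:
  assumes "pseudo_cosine D a b c \<theta> \<sigma>" "0 < D"
  shows "\<theta> = real (a 0) + real (b 0) * \<sigma> 1"
proof -
  have "(if (0::nat) = 0 then 0 else real (c 0) * \<sigma> (0 - 1)) + real (a 0) * \<sigma> 0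
      + real (b 0) * \<sigma> (0 + 1) = \<theta> * \<sigma> 0"
    using assms unfolding pseudo_cosine_def by blast
  then show ?thesis using pseudo_cosine_0[OF assms(1)] by simp
qed

lemma tight_pair_commute: "tight_pair D a b c \<sigma> \<rho> \<Longrightarrow> tight_pair D a b c \<rho> \<sigma>"
  unfolding tight_pair_def by (simp add: mult.commute)

lemma auxiliary_parameter_commute:
  "auxiliary_parameter D \<sigma> \<rho> \<epsilon> \<longleftrightarrow> auxiliary_parameter D \<rho> \<sigma> (- \<epsilon>)"
  unfolding auxiliary_parameter_def by (auto simp: algebra_simps)

lemma auxiliary_parameter_factor:
  "auxiliary_parameter D \<sigma> \<rho> \<epsilon> \<Longrightarrow> 1 \<le> j \<Longrightarrow> j \<le> D \<Longrightarrow>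
    \<rho> j * (\<sigma> j - \<epsilon> * \<sigma> (j - 1)) = \<rho> (j - 1) * (\<sigma> (j - 1) - \<epsilon> * \<sigma> j)"
  unfolding auxiliary_parameter_def by (auto simp: algebra_simps)

lemma auxiliary_parameter_zero_iff:
  assumes aux: "auxiliary_parameter D \<sigma> \<rho> \<epsilon>" and \<epsilon>: "\<epsilon> * \<epsilon> \<noteq> 1"
    and j: "1 \<le> j" "j \<le> D"
    and \<sigma>: "\<not> (\<sigma> (j - 1) = 0 \<and> \<sigma> j = 0)" and \<rho>: "\<not> (\<rho> (j - 1) = 0 \<and> \<rho> j = 0)"
  shows "\<sigma> (j - 1) = \<epsilon> * \<sigma> j \<longleftrightarrow> \<rho> j = 0"
    and "\<sigma> j = \<epsilon> * \<sigma> (j - 1) \<longleftrightarrow> \<rho> (j - 1) = 0"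
proof -
  note factor = auxiliary_parameter_factor[OF aux j]
  have "(1 - \<epsilon> * \<epsilon>) * \<sigma> j * \<rho> j = 0" if "\<sigma> (j - 1) = \<epsilon> * \<sigma> j"
    using factor that by (simp add: algebra_simps)
  moreover have "(1 - \<epsilon> * \<epsilon>) * \<sigma> (j - 1) * \<rho> (j - 1) = 0" if "\<sigma> j = \<epsilon> * \<sigma> (j - 1)"
    using factor that by (simp add: algebra_simps)
  ultimately show "\<sigma> (j - 1) = \<epsilon> * \<sigma> j \<longleftrightarrow> \<rho> j = 0"
    and "\<sigma> j = \<epsilon> * \<sigma> (j - 1) \<longleftrightarrow> \<rho> (j - 1) = 0"
    using factor \<epsilon> \<sigma> \<rho> by auto
qed

lemma auxiliary_parameter_symmetric_transfer:
  assumes aux: "auxiliary_parameter D \<sigma> \<rho> \<epsilon>" and i: "1 \<le> i" "i + 1 \<le> D"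
    and sym: "\<sigma> (i - 1) = \<sigma> (i + 1)" and ne: "\<sigma> (i - 1) \<noteq> \<epsilon> * \<sigma> i"
  shows "\<rho> (i - 1) = \<rho> (i + 1)"
proof -
  have "\<rho> (i + 1) * (\<sigma> (i - 1) - \<epsilon> * \<sigma> i) = \<rho> (i - 1) * (\<sigma> (i - 1) - \<epsilon> * \<sigma> i)"
    using auxiliary_parameter_factor[OF aux, of i] auxiliary_parameter_factor[OF aux, of "i + 1"]
      i sym by (simp add: algebra_simps)
  then show ?thesis using ne by simp
qed

context distance_regular_graph
begin

lemma is_pseudo_cosine_rec:
  assumes "is_pseudo_cosine D a b c \<sigma>" "0 < j" "j < D"
  shows "real (c j) * \<sigma> (j - 1) + real (a j) * \<sigma> j + real (b j) * \<sigma> (j + 1)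
    = real (b 0) * \<sigma> 1 * \<sigma> j"
proof -
  obtain \<theta> where \<theta>: "pseudo_cosine D a b c \<theta> \<sigma>"
    using assms(1) unfolding is_pseudo_cosine_def by blast
  then have "\<theta> = real (b 0) * \<sigma> 1" using pseudo_cosine_eigenvalue[OF \<theta>] a_0 assms(2,3) by simp
  with pseudo_cosine_recurrence[OF \<theta> assms(2,3)] show ?thesis by simp
qed

lemma is_pseudo_cosine_rec_1:
  assumes "is_pseudo_cosine D a b c \<sigma>" "1 < D"
  shows "1 + real (a 1) * \<sigma> 1 + real (b 1) * \<sigma> 2 = real (b 0) * \<sigma> 1 * \<sigma> 1"
  using is_pseudo_cosine_rec[OF assms(1), of 1] is_pseudo_cosine_0[OF assms(1)] c_1 assms(2)
  by (simp add: numeral_2_eq_2)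

lemma pseudo_cosine_no_consecutive_zeros:
  "is_pseudo_cosine D a b c \<sigma> \<Longrightarrow> j < D \<Longrightarrow> \<not> (\<sigma> j = 0 \<and> \<sigma> (j + 1) = 0)"
proof (induction j)
  case 0
  then show ?case using is_pseudo_cosine_0[OF "0.prems"(1)] by simp
next
  case (Suc j)
  have "real (c (Suc j)) * \<sigma> j = 0" if "\<sigma> (Suc j) = 0" "\<sigma> (Suc j + 1) = 0"
    using is_pseudo_cosine_rec[OF Suc.prems(1), of "Suc j"] Suc.prems(2) that by simp
  then show ?case using Suc c_pos[of "Suc j"] by auto
qed

lemma pseudo_cosine_symmetric_nonzero:
  assumes "is_pseudo_cosine D a b c \<sigma>" "0 < i" "i < D" "\<sigma> (i - 1) = \<sigma> (i + 1)"
  shows "\<sigma> i \<noteq> 0"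
proof
  assume "\<sigma> i = 0"
  then have "(real (c i) + real (b i)) * \<sigma> (i - 1) = 0"
    using is_pseudo_cosine_rec[OF assms(1-3)] assms(4) by (simp add: algebra_simps)
  moreover have "0 < c i" "0 < b i" using c_pos b_pos assms(2,3) by auto
  moreover have "\<not> (\<sigma> (i - 1) = 0 \<and> \<sigma> i = 0)"
    using pseudo_cosine_no_consecutive_zeros[OF assms(1), of "i - 1"] assms(2,3) by simp
  ultimately show False using \<open>\<sigma> i = 0\<close> by simp
qed

lemma tight_pair_not_both_symmetric:
  assumes tight: "tight_pair D a b c \<sigma> \<rho>" and i: "0 < i" "i < D" and ai: "a i \<noteq> 0"
    and nontrivial: "\<sigma> 1 \<noteq> 1" "\<rho> 1 \<noteq> 1"
    and sym: "\<sigma> (i - 1) = \<sigma> (i + 1)" "\<rho> (i - 1) = \<rho> (i + 1)"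
  shows False
proof -
  have pc: "is_pseudo_cosine D a b c \<sigma>" "is_pseudo_cosine D a b c \<rho>"
    "is_pseudo_cosine D a b c (\<lambda>j. \<sigma> j * \<rho> j)"
    using tight unfolding tight_pair_def by auto
  define k A where "k = real (b 0)" and "A = real (a i)"
  define s where "s = real (b i) + real (c i)"
  have s: "s = k - A" using abc_sum[of i] i unfolding s_def k_def A_def by simp
  have rec: "s * \<sigma> (i - 1) = (k * \<sigma> 1 - A) * \<sigma> i"
    "s * \<rho> (i - 1) = (k * \<rho> 1 - A) * \<rho> i"
    "s * (\<sigma> (i - 1) * \<rho> (i - 1)) = (k * (\<sigma> 1 * \<rho> 1) - A) * (\<sigma> i * \<rho> i)"
    using is_pseudo_cosine_rec[OF pc(1) i] is_pseudo_cosine_rec[OF pc(2) i] is_pseudo_cosine_rec[OF pc(3) i] sym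
    unfolding s_def k_def A_def by (simp_all add: algebra_simps)
  \<comment> \<open>multiply the first two equations and compare with the third\<close>
  have "A * k * ((\<sigma> 1 - 1) * (\<rho> 1 - 1)) * (\<sigma> i * \<rho> i) = 0"
    using rec s by algebra
  moreover have "0 < k" using b_pos[of 0] i unfolding k_def by simp
  ultimately have "\<sigma> i * \<rho> i = 0" using ai nontrivial unfolding A_def by simp
  then show False using pseudo_cosine_symmetric_nonzero[OF _ i] pc sym by simp
qed

lemma auxiliary_parameter_1_initial_values:
  assumes D: "2 \<le> D" and a1: "a 1 \<noteq> 0" and tight: "tight_pair D a b c \<sigma> \<rho>"
    and nontrivial: "\<sigma> 1 \<noteq> 1" and aux: "auxiliary_parameter D \<sigma> \<rho> 1"
  shows "\<rho> 1 = -1" and "real (b 0) * \<sigma> 1 = -1" and "1 < \<rho> 2"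
proof -
  have pc: "is_pseudo_cosine D a b c \<sigma>" "is_pseudo_cosine D a b c \<rho>"
    "is_pseudo_cosine D a b c (\<lambda>j. \<sigma> j * \<rho> j)"
    using tight unfolding tight_pair_def by auto
  define k A1 B1 where "k = real (b 0)" and "A1 = real (a 1)" and "B1 = real (b 1)"
  have k: "k = 1 + A1 + B1" using abc_sum[of 1] c_1 D unfolding k_def A1_def B1_def by simp
  have pos: "0 < A1" "0 < B1" using a1 b_pos[of 1] D unfolding A1_def B1_def by auto
  have "(\<sigma> 1 - 1) * (\<rho> 1 + 1) = 0"
    using auxiliary_parameter_factor[OF aux, of 1] D is_pseudo_cosine_0[OF pc(1)]
      is_pseudo_cosine_0[OF pc(2)] by (simp add: algebra_simps)
  then show \<rho>1: "\<rho> 1 = -1" using nontrivial by simp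
  have \<rho>2: "B1 * \<rho> 2 = B1 + 2 * A1"
    using is_pseudo_cosine_rec_1[OF pc(2)] D \<rho>1 k unfolding k_def A1_def B1_def by simp
  then have "B1 * 1 < B1 * \<rho> 2" using pos by simp
  then show "1 < \<rho> 2" using pos(2) by simp
  have \<sigma>2: "B1 * \<sigma> 2 = k * \<sigma> 1 * \<sigma> 1 - 1 - A1 * \<sigma> 1"
    using is_pseudo_cosine_rec_1[OF pc(1)] D unfolding k_def A1_def B1_def by simp
  have "1 - A1 * \<sigma> 1 + B1 * (\<sigma> 2 * \<rho> 2) = k * \<sigma> 1 * \<sigma> 1"
    using is_pseudo_cosine_rec_1[OF pc(3)] D \<rho>1 unfolding k_def A1_def B1_def by simp
  then have "2 * A1 * ((\<sigma> 1 - 1) * (k * \<sigma> 1 + 1)) = 0"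
    using \<sigma>2 \<rho>2 k by algebra
  then show "real (b 0) * \<sigma> 1 = -1" using pos nontrivial unfolding k_def by simp
qed

lemma auxiliary_parameter_ne_1:
  assumes D: "3 \<le> D" and a1: "a 1 \<noteq> 0" and tight: "tight_pair D a b c \<sigma> \<rho>"
    and nontrivial: "\<sigma> 1 \<noteq> 1"
  shows "\<not> auxiliary_parameter D \<sigma> \<rho> 1"
proof
  assume aux: "auxiliary_parameter D \<sigma> \<rho> 1"
  have pc: "is_pseudo_cosine D a b c \<sigma>" "is_pseudo_cosine D a b c (\<lambda>j. \<sigma> j * \<rho> j)"
    using tight unfolding tight_pair_def by auto
  define k A2 B2 C2 where "k = real (b 0)" and "A2 = real (a 2)" and "B2 = real (b 2)"
    and "C2 = real (c 2)"
  have \<rho>1: "\<rho> 1 = -1" and k\<sigma>1: "k * \<sigma> 1 = -1" and \<rho>2: "1 < \<rho> 2"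
    using auxiliary_parameter_1_initial_values[OF _ a1 tight nontrivial aux] D
    unfolding k_def by auto
  have pos: "0 < k" "0 < B2" "0 < C2"
    using b_pos[of 0] b_pos[of 2] c_pos[of 2] D unfolding k_def B2_def C2_def by auto
  have "(\<sigma> 2 - \<sigma> 1) * (\<rho> 2 + \<rho> 1) = 0"
    using auxiliary_parameter_factor[OF aux, of 2] D by (simp add: algebra_simps)
  then have \<sigma>2: "\<sigma> 2 = \<sigma> 1" using \<rho>1 \<rho>2 by simp
  have "C2 * \<sigma> 1 + A2 * \<sigma> 2 + B2 * \<sigma> 3 = k * \<sigma> 1 * \<sigma> 2"
    using is_pseudo_cosine_rec[OF pc(1), of 2] D unfolding k_def A2_def B2_def C2_def by simp
  then have kB2\<sigma>3: "k * (B2 * \<sigma> 3) = 1 + C2 + A2" using \<sigma>2 k\<sigma>1 by algebra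
  then have "0 < k * (B2 * \<sigma> 3)" using pos unfolding A2_def by simp
  then have "0 < \<sigma> 3" using pos by (simp add: zero_less_mult_iff)
  moreover have "\<sigma> 1 < 0" using k\<sigma>1 pos(1) by (smt (verit) mult_nonneg_nonneg)
  moreover have "(\<sigma> 3 - \<sigma> 2) * (\<rho> 3 + \<rho> 2) = 0"
    using auxiliary_parameter_factor[OF aux, of 3] D by (simp add: algebra_simps)
  ultimately have \<rho>3: "\<rho> 3 = - \<rho> 2" using \<sigma>2 by simp
  have "C2 * (\<sigma> 1 * \<rho> 1) + A2 * (\<sigma> 2 * \<rho> 2) + B2 * (\<sigma> 3 * \<rho> 3)
      = k * (\<sigma> 1 * \<rho> 1) * (\<sigma> 2 * \<rho> 2)"
    using is_pseudo_cosine_rec[OF pc(2), of 2] D unfolding k_def A2_def B2_def C2_def by simp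
  then have "C2 * (1 - \<rho> 2) = 2 * A2 * \<rho> 2" using \<rho>1 \<sigma>2 \<rho>3 k\<sigma>1 kB2\<sigma>3 by algebra
  moreover have "C2 * (1 - \<rho> 2) < 0" using pos \<rho>2 by (simp add: mult_pos_neg)
  moreover have "0 \<le> 2 * A2 * \<rho> 2" using \<rho>2 unfolding A2_def by simp
  ultimately show False by simp
qed

lemma auxiliary_parameter_ne_minus_1:
  assumes "3 \<le> D" "a 1 \<noteq> 0" "tight_pair D a b c \<sigma> \<rho>" "\<rho> 1 \<noteq> 1"
  shows "\<not> auxiliary_parameter D \<sigma> \<rho> (-1)"
  using auxiliary_parameter_ne_1[OF assms(1,2) tight_pair_commute[OF assms(3)] assms(4)]
    auxiliary_parameter_commute by auto

end

theorem lemma11p1: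
  fixes V :: "'v set" and E :: "'v \<Rightarrow> 'v \<Rightarrow> bool" and D :: nat
    and a b c :: "nat \<Rightarrow> nat" and \<sigma> \<rho> :: "nat \<Rightarrow> real" and \<epsilon> :: real and i :: nat
  assumes "distance_regular V E D a b c"
    and "D \<ge> 3" and "a 1 \<noteq> 0"
    and "nontrivial_pc D a b c \<sigma>" and "nontrivial_pc D a b c \<rho>"
    and "tight_pair D a b c \<sigma> \<rho>"
    and "auxiliary_parameter D \<sigma> \<rho> \<epsilon>"
    and "1 \<le> i" and "i \<le> D - 1"
  shows "(\<sigma> (i - 1) = \<epsilon> * \<sigma> i \<longleftrightarrow> \<sigma> (i + 1) = \<epsilon> * \<sigma> i)
       \<and> (\<sigma> (i + 1) = \<epsilon> * \<sigma> i \<longleftrightarrow> \<sigma> (i - 1) = \<sigma> (i + 1))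
       \<and> (\<sigma> (i - 1) = \<sigma> (i + 1) \<longleftrightarrow> \<rho> i = 0)"
proof -
  interpret distance_regular_graph V E D a b c by unfold_locales (rule assms(1))
  note D = assms(2) and a1 = assms(3) and tight = assms(6) and aux = assms(7)
  have i: "1 \<le> i" "i < D" using assms(8,9) D by auto
  have pc: "is_pseudo_cosine D a b c \<sigma>" "is_pseudo_cosine D a b c \<rho>"
    and nontrivial: "\<sigma> 1 \<noteq> 1" "\<rho> 1 \<noteq> 1"
    using assms(4,5) unfolding nontrivial_pc_def by auto
  have \<epsilon>: "\<epsilon> * \<epsilon> \<noteq> 1"
    using auxiliary_parameter_ne_1[OF D a1 tight nontrivial(1)]
      auxiliary_parameter_ne_minus_1[OF D a1 tight nontrivial(2)] aux square_eq_1_iff by metis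
  have nz: "\<not> (\<sigma> (i - 1) = 0 \<and> \<sigma> i = 0)" "\<not> (\<sigma> i = 0 \<and> \<sigma> (i + 1) = 0)"
    "\<not> (\<rho> (i - 1) = 0 \<and> \<rho> i = 0)" "\<not> (\<rho> i = 0 \<and> \<rho> (i + 1) = 0)"
    using pseudo_cosine_no_consecutive_zeros[OF pc(1), of "i - 1"]
      pseudo_cosine_no_consecutive_zeros[OF pc(1), of i]
      pseudo_cosine_no_consecutive_zeros[OF pc(2), of "i - 1"]
      pseudo_cosine_no_consecutive_zeros[OF pc(2), of i] i by auto
  have i_iv: "\<sigma> (i - 1) = \<epsilon> * \<sigma> i \<longleftrightarrow> \<rho> i = 0"
    using auxiliary_parameter_zero_iff(1)[OF aux \<epsilon>, of i] i nz by simp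
  have ii_iv: "\<sigma> (i + 1) = \<epsilon> * \<sigma> i \<longleftrightarrow> \<rho> i = 0"
    using auxiliary_parameter_zero_iff(2)[OF aux \<epsilon>, of "i + 1"] i nz by simp
  \<comment> \<open>if \<open>\<rho> i \<noteq> 0\<close>, then (i) fails, so a symmetric \<open>\<sigma>\<close> forces a symmetric \<open>\<rho>\<close>\<close>
  have iii_iv: "\<sigma> (i - 1) = \<sigma> (i + 1) \<longleftrightarrow> \<rho> i = 0"
    using i_iv ii_iv auxiliary_parameter_symmetric_transfer[OF aux, of i]
      tight_pair_not_both_symmetric[OF tight _ _ a_nonzero[OF a1 i] nontrivial] i by force
  show ?thesis using i_iv ii_iv iii_iv by simp
qed

end
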